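(* Let $I$ be an invertible right ideal of $\mathbb{Z}[D_{2n}]$ and let $I^{-1}$ be its left inverse (left dual). Let $\Lambda$ and $\Lambda^{-1}$ be the lattices in $\mathbb{R}^{2n}$ obtained from $I$ and $I^{-1}$ respectively by the coefficient embedding. Then the dual lattice $\Lambda^*$ and $\Lambda^{-1}$ coincide up to a permutation of coordinates.
   Context: $D_{2n}$ is the dihedral group of order $2n$ generated by $\mathfrak{r},\mathfrak{s}$ with $\mathfrak{r}^n=\mathfrak{s}^2=1$, $\mathfrak{s}\mathfrak{r}\mathfrak{s}=\mathfrak{r}^{-1}$. The coefficient embedding identifies $\mathbb{Q}[D_{2n}]\subset\mathbb{R}[D_{2n}]$ with (a subset of) $\mathbb{R}^{2n}$ by sending $\sum_{i=0}^{n-1}x_i\mathfrak{r}^i+\sum_{j=0}^{n-1}y_j\mathfrak{s}\mathfrak{r}^j$ to $(x_0,\dots,x_{n-1},y_0,\dots,y_{n-1})$. For a right ideal $I$ of $\mathbb{Z}[D_{2n}]$, its left dual is $I^{-1}=\{x\in\mathbb{Q}[D_{2n}] : xy\in\mathbb{Z}[D_{2n}]\ \forall y\in I\}$, and $I$ is invertible if $I^{-1}I=\mathbb{Z}[D_{2n}]$. The dual of a lattice $L\subset\mathbb{R}^m$ is $L^*=\{u\in\mathbb{R}^m : \langle u,v\rangle\in\mathbb{Z}\ \forall v\in L\}$. *)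

theory Defs
  imports "HOL-Analysis.Analysis" "HOL-Combinatorics.Permutations"
begin

text \<open>Elements of R[D_2n] are represented directly by their coefficient vectors
  in R^(2n), i.e. functions v :: nat => real vanishing at indices >= 2n.
  Index k < n is the coefficient of r^k, index n + j (j < n) that of s r^j.
  Thus the coefficient embedding is the identity in this representation.\<close>

definition vspace :: "nat \<Rightarrow> (nat \<Rightarrow> real) set" where
  "vspace n = {v. \<forall>k\<ge>2*n. v k = 0}"

definition ZG :: "nat \<Rightarrow> (nat \<Rightarrow> real) set" where
  "ZG n = {v \<in> vspace n. \<forall>k. v k \<in> \<int>}"

definition QG :: "nat \<Rightarrow> (nat \<Rightarrow> real) set" where
  "QG n = {v \<in> vspace n. \<forall>k. v k \<in> \<rat>}"

text \<open>Index of the product of basis elements: (s^a r^i)(s^b r^j) = s^(a+b) r^((-1)^b i + j).\<close>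
definition dmul :: "nat \<Rightarrow> nat \<Rightarrow> nat \<Rightarrow> nat" where
  "dmul n k l =
     (let a = (n \<le> k); i = k mod n; b = (n \<le> l); j = l mod n;
          e = (if b then (n - i + j) mod n else (i + j) mod n)
      in if a \<noteq> b then n + e else e)"

definition gmul :: "nat \<Rightarrow> (nat \<Rightarrow> real) \<Rightarrow> (nat \<Rightarrow> real) \<Rightarrow> (nat \<Rightarrow> real)" where
  "gmul n x y = (\<lambda>m. \<Sum>k<2*n. \<Sum>l<2*n. if dmul n k l = m then x k * y l else 0)"

definition right_ideal :: "nat \<Rightarrow> (nat \<Rightarrow> real) set \<Rightarrow> bool" where
  "right_ideal n I \<longleftrightarrow> I \<subseteq> ZG n \<and> (\<lambda>_. 0) \<in> I
     \<and> (\<forall>x\<in>I. \<forall>y\<in>I. (\<lambda>k. x k + y k) \<in> I)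
     \<and> (\<forall>x\<in>I. (\<lambda>k. - x k) \<in> I)
     \<and> (\<forall>x\<in>I. \<forall>r\<in>ZG n. gmul n x r \<in> I)"

definition left_dual :: "nat \<Rightarrow> (nat \<Rightarrow> real) set \<Rightarrow> (nat \<Rightarrow> real) set" where
  "left_dual n I = {x \<in> QG n. \<forall>y\<in>I. gmul n x y \<in> ZG n}"

definition ideal_prod :: "nat \<Rightarrow> (nat \<Rightarrow> real) set \<Rightarrow> (nat \<Rightarrow> real) set \<Rightarrow> (nat \<Rightarrow> real) set" where
  "ideal_prod n A B = {v. \<exists>(m::nat) a b. (\<forall>i<m. a i \<in> A \<and> b i \<in> B)
        \<and> v = (\<lambda>k. \<Sum>i<m. gmul n (a i) (b i) k)}"

definition invertible_right_ideal :: "nat \<Rightarrow> (nat \<Rightarrow> real) set \<Rightarrow> bool" where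
  "invertible_right_ideal n I \<longleftrightarrow> right_ideal n I \<and> ideal_prod n (left_dual n I) I = ZG n"

definition full_rank :: "nat \<Rightarrow> (nat \<Rightarrow> real) set \<Rightarrow> bool" where
  "full_rank n L \<longleftrightarrow> (\<forall>w\<in>vspace n. \<exists>(m::nat) a c. (\<forall>i<m. a i \<in> L)
        \<and> w = (\<lambda>k. \<Sum>i<m. c i * a i k))"

definition dual_lattice :: "nat \<Rightarrow> (nat \<Rightarrow> real) set \<Rightarrow> (nat \<Rightarrow> real) set" where
  "dual_lattice n L = {u \<in> vspace n. \<forall>v\<in>L. (\<Sum>k<2*n. u k * v k) \<in> \<int>}"

end

theory Submission
  imports Defs "Jordan_Normal_Form.Determinant"
begin

text \<open>For x, y in R[G] the coefficient of the identity in x y is \<Sum>g x(g\<inverse>) y(g), so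
  composing with the permutation g \<mapsto> g\<inverse> of the coordinates turns the left dual condition
  "(x y)(1) \<in> \<int> for y \<in> I" into the lattice dual condition "\<langle>x \<circ> \<sigma>, y\<rangle> \<in> \<int> for y \<in> I".
  The remaining coefficients come for free: (x y)(g) = (x (y g\<inverse>))(1) and y g\<inverse> \<in> I because I
  is a right ideal. Finally, vectors of the dual lattice are rational, by Cramer's rule applied
  to the integral Gram system of finitely many vectors of I spanning \<real>^(2n).\<close>

definition group_conv :: "('a, 'b) monoid_scheme \<Rightarrow> ('a \<Rightarrow> 'r::semiring_1) \<Rightarrow> ('a \<Rightarrow> 'r) \<Rightarrow> 'a \<Rightarrow> 'r" where
  "group_conv G x y m = (\<Sum>k \<in> carrier G. \<Sum>l \<in> carrier G. if k \<otimes>\<^bsub>G\<^esub> l = m then x k * y l else 0)"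

lemma (in group) group_conv_eq:
  assumes "finite (carrier G)" "m \<in> carrier G"
  shows "group_conv G x y m = (\<Sum>k \<in> carrier G. x k * y (inv k \<otimes> m))"
proof -
  have "(\<Sum>l \<in> carrier G. if k \<otimes> l = m then x k * y l else 0) = x k * y (inv k \<otimes> m)"
    if k: "k \<in> carrier G" for k
  proof -
    have "k \<otimes> l = m \<longleftrightarrow> l = inv k \<otimes> m" if "l \<in> carrier G" for l
      using that k assms by (auto simp: inv_solve_left)
    then show ?thesis
      using k assms by (simp add: sum.delta cong: if_cong)
  qed
  then show ?thesis
    unfolding group_conv_def by (intro sum.cong) auto
qed

lemma (in group) group_conv_indicator:
  assumes "finite (carrier G)" "g \<in> carrier G" "h \<in> carrier G"
  shows "group_conv G y (indicator {g}) h = y (h \<otimes> inv g)"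
proof -
  have "y k * indicator {g} (inv k \<otimes> h) = (if k = h \<otimes> inv g then y k else 0)"
    if "k \<in> carrier G" for k
    using that assms by (auto simp: inv_solve_left' inv_solve_right)
  then show ?thesis
    using assms by (simp add: group_conv_eq sum.delta cong: sum.cong)
qed

lemma (in group) group_conv_one:
  assumes "finite (carrier G)"
  shows "group_conv G x y \<one> = (\<Sum>k \<in> carrier G. x (inv k) * y k)"
proof -
  have "group_conv G x y \<one> = (\<Sum>k \<in> carrier G. x k * y (inv k))"
    using assms by (simp add: group_conv_eq)
  also have "\<dots> = (\<Sum>k \<in> carrier G. x (inv k) * y (inv (inv k)))"
    by (rule sum.reindex_bij_witness[of _ "\<lambda>k. inv k" "\<lambda>k. inv k"]) auto
  finally show ?thesis
    by (simp cong: sum.cong)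
qed

lemma (in group) group_conv_translate:
  assumes "finite (carrier G)" "m \<in> carrier G"
  shows "group_conv G x (group_conv G y (indicator {inv m})) \<one> = group_conv G x y m"
proof -
  have "group_conv G y (indicator {inv m}) (inv k) = y (inv k \<otimes> m)" if "k \<in> carrier G" for k
    using that assms by (simp add: group_conv_indicator)
  then show ?thesis
    using assms by (simp add: group_conv_eq cong: sum.cong)
qed

lemma det_Ints:
  assumes "(A :: real mat) \<in> carrier_mat N N" "\<And>i j. i < N \<Longrightarrow> j < N \<Longrightarrow> A $$ (i, j) \<in> \<int>"
  shows "det A \<in> \<int>"
proof -
  have "A = map_mat of_int (map_mat floor A)"
    using assms by (intro eq_matI) (auto elim: Ints_cases)
  then have "det A = of_int (det (map_mat floor A))"
    by (metis of_int_hom.hom_det)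
  then show ?thesis
    by simp
qed

definition gram_mat :: "nat \<Rightarrow> (nat \<Rightarrow> real) set \<Rightarrow> real mat" where
  "gram_mat N F = mat N N (\<lambda>(i, j). \<Sum>a\<in>F. a i * a j)"

lemma gram_mat_carrier: "gram_mat N F \<in> carrier_mat N N"
  by (simp add: gram_mat_def)

lemma gram_mat_mult_vec:
  assumes "v \<in> carrier_vec N" "i < N"
  shows "(gram_mat N F *\<^sub>v v) $ i = (\<Sum>a\<in>F. a i * (\<Sum>j<N. a j * v $ j))"
proof -
  have "(gram_mat N F *\<^sub>v v) $ i = (\<Sum>j<N. (\<Sum>a\<in>F. a i * a j) * v $ j)"
    using assms by (simp add: gram_mat_def mult_mat_vec_def scalar_prod_def atLeast0LessThan)
  also have "\<dots> = (\<Sum>a\<in>F. a i * (\<Sum>j<N. a j * v $ j))"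
    by (simp add: sum_distrib_left sum_distrib_right sum.swap[of _ F] mult.assoc)
  finally show ?thesis .
qed

lemma det_gram_mat_nonzero:
  assumes "finite F"
    and separating: "\<And>x j. \<forall>a\<in>F. (\<Sum>j<N. a j * x j) = 0 \<Longrightarrow> j < N \<Longrightarrow> x j = 0"
  shows "det (gram_mat N F) \<noteq> 0"
proof
  assume "det (gram_mat N F) = 0"
  then obtain v where v: "v \<in> carrier_vec N" "v \<noteq> 0\<^sub>v N" "gram_mat N F *\<^sub>v v = 0\<^sub>v N"
    using det_0_iff_vec_prod_zero[OF gram_mat_carrier] by blast
  define s where "s a = (\<Sum>j<N. a j * v $ j)" for a :: "nat \<Rightarrow> real"
  have "0 = (\<Sum>i<N. v $ i * (gram_mat N F *\<^sub>v v) $ i)"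
    using v(3) by simp
  also have "\<dots> = (\<Sum>i<N. v $ i * (\<Sum>a\<in>F. a i * s a))"
    using v(1) by (simp add: gram_mat_mult_vec s_def)
  also have "\<dots> = (\<Sum>a\<in>F. s a * s a)"
    by (simp add: s_def sum_distrib_left sum_distrib_right sum.swap[of _ F] mult.assoc mult.left_commute mult.commute)
  finally have "\<forall>a\<in>F. s a = 0"
    using assms(1) by (simp add: sum_nonneg_eq_0_iff)
  then have "v $ j = 0" if "j < N" for j
    using separating[of "\<lambda>j. v $ j"] that by (simp add: s_def)
  then have "v = 0\<^sub>v N"
    using v(1) by (intro eq_vecI) auto
  with v(2) show False ..
qed

lemma rat_of_integral_products:
  fixes N :: nat and F :: "(nat \<Rightarrow> real) set"
  assumes "finite F"
    and integral: "\<And>a j. a \<in> F \<Longrightarrow> a j \<in> \<int>"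
    and separating: "\<And>x j. \<forall>a\<in>F. (\<Sum>j<N. a j * x j) = 0 \<Longrightarrow> j < N \<Longrightarrow> x j = 0"
    and products: "\<And>a. a \<in> F \<Longrightarrow> (\<Sum>j<N. a j * u j) \<in> \<int>"
    and "k < N"
  shows "u k \<in> \<rat>"
proof -
  let ?G = "gram_mat N F" and ?u = "vec N u"
  define b where "b = ?G *\<^sub>v ?u"
  have G_Ints: "?G $$ (i, j) \<in> \<int>" if "i < N" "j < N" for i j
    using that integral by (auto simp: gram_mat_def intro!: Ints_sum Ints_mult)
  have b_Ints: "b $ i \<in> \<int>" if "i < N" for i
  proof -
    have "b $ i = (\<Sum>a\<in>F. a i * (\<Sum>j<N. a j * u j))"
      using that by (simp add: b_def gram_mat_mult_vec)
    also have "\<dots> \<in> \<int>"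
      by (rule Ints_sum, rule Ints_mult) (simp_all add: integral products)
    finally show ?thesis .
  qed
  have "det (replace_col ?G b k) = u k * det ?G"
    using cramer_lemma_mat[OF gram_mat_carrier _ \<open>k < N\<close>, of ?u] \<open>k < N\<close> by (simp add: b_def)
  moreover have "det (replace_col ?G b k) \<in> \<int>"
    using G_Ints b_Ints gram_mat_carrier[of N F]
    by (intro det_Ints[of _ N]) (auto simp: replace_col_def b_def)
  moreover have "det ?G \<in> \<int>"
    using G_Ints by (intro det_Ints[OF gram_mat_carrier])
  moreover have "det ?G \<noteq> 0"
    by (rule det_gram_mat_nonzero[OF assms(1)]) (blast intro: separating)
  ultimately have "u k = det (replace_col ?G b k) / det ?G"
    by simp
  also have "\<dots> \<in> \<rat>"
    using \<open>det (replace_col ?G b k) \<in> \<int>\<close> \<open>det ?G \<in> \<int>\<close> Ints_subset_Rats by (intro Rats_divide) auto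
  finally show ?thesis .
qed

lemma dmul_less:
  assumes "0 < n" shows "dmul n k l < 2 * n"
proof -
  have "x mod n < 2 * n" for x
    using mod_less_divisor[OF assms, of x] by linarith
  then show ?thesis
    by (simp add: dmul_def Let_def)
qed

lemma dmul_ge_iff:
  assumes "0 < n" shows "n \<le> dmul n k l \<longleftrightarrow> (n \<le> k) \<noteq> (n \<le> l)"
proof -
  have "\<not> n \<le> x mod n" for x
    using mod_less_divisor[OF assms, of x] by linarith
  then show ?thesis
    by (simp add: dmul_def Let_def)
qed

lemma int_diff_add_mod:
  assumes "i < n" shows "int ((n - i + j) mod n) = (int j - int i) mod int n"
proof -
  have "int ((n - i + j) mod n) = (int n + (int j - int i)) mod int n"
    using assms by (simp add: of_nat_mod of_nat_diff algebra_simps)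
  then show ?thesis by simp
qed

lemma dmul_mod:
  assumes "0 < n"
  shows "int (dmul n k l mod n) =
     ((if n \<le> l then - int (k mod n) else int (k mod n)) + int (l mod n)) mod int n"
proof (cases "n \<le> l")
  case True
  have "dmul n k l mod n = (n - k mod n + l mod n) mod n"
    using True by (simp add: dmul_def Let_def)
  then have "int (dmul n k l mod n) = int ((n - k mod n + l mod n) mod n)"
    by (rule arg_cong)
  also have "\<dots> = (int (l mod n) - int (k mod n)) mod int n"
    using assms by (intro int_diff_add_mod) simp
  finally show ?thesis
    using True by simp
next
  case False
  then show ?thesis
    by (simp add: dmul_def Let_def of_nat_mod mod_simps)
qed

lemma index_mod: "(k::nat) < 2 * n \<Longrightarrow> k mod n = (if n \<le> k then k - n else k)"
  by (simp add: le_mod_geq)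

lemma index_eqI:
  fixes k l :: nat
  assumes "k < 2 * n" "l < 2 * n" "(n \<le> k) = (n \<le> l)" "int (k mod n) = int (l mod n)"
  shows "k = l"
  using assms index_mod[OF assms(1)] index_mod[OF assms(2)] by (auto split: if_splits)

lemma dmul_assoc:
  assumes "0 < n" shows "dmul n (dmul n k l) m = dmul n k (dmul n l m)"
proof (rule index_eqI)
  show "int (dmul n (dmul n k l) m mod n) = int (dmul n k (dmul n l m) mod n)"
    using assms
    by (cases "n \<le> l"; cases "n \<le> m") (simp_all add: dmul_mod dmul_ge_iff mod_simps algebra_simps)
qed (use assms in \<open>auto simp add: dmul_less dmul_ge_iff\<close>)

text \<open>Index of the inverse: r^k \<mapsto> r^(-k), and every reflection s r^j is an involution;
  indices \<ge> 2n are fixed, which makes \<open>dinv n\<close> a permutation of \<nat>.\<close>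

definition dinv :: "nat \<Rightarrow> nat \<Rightarrow> nat" where
  "dinv n k = (if k < n then (n - k) mod n else k)"

lemma dinv_dinv: "dinv n (dinv n k) = k"
  by (cases "k = 0") (auto simp: dinv_def)

lemma dinv_less: "k < 2 * n \<Longrightarrow> dinv n k < 2 * n"
proof (cases "k < n")
  case True
  then have "(n - k) mod n < n"
    by simp
  moreover have "dinv n k = (n - k) mod n"
    using True by (simp add: dinv_def)
  ultimately show ?thesis
    by linarith
qed (simp add: dinv_def)

lemma dmul_zero_left:
  assumes "0 < n" "k < 2 * n" shows "dmul n 0 k = k"
proof (rule index_eqI)
  show "dmul n 0 k < 2 * n"
    using assms(1) by (rule dmul_less)
  show "(n \<le> dmul n 0 k) = (n \<le> k)"
    using assms(1) by (simp add: dmul_ge_iff)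
  show "int (dmul n 0 k mod n) = int (k mod n)"
    using assms(1) by (simp add: dmul_mod)
qed (fact assms(2))

lemma dmul_dinv_left:
  assumes "0 < n" "k < 2 * n" shows "dmul n (dinv n k) k = 0"
proof (cases "k < n")
  case True
  have "(n - k) mod n < n"
    using True by simp
  with True have "dmul n (dinv n k) k = ((n - k) mod n + k) mod n"
    by (simp add: dmul_def dinv_def Let_def not_le)
  also have "\<dots> = 0"
    using True by (simp add: mod_add_left_eq)
  finally show ?thesis .
next
  case False
  have "k mod n < n"
    using assms(1) by simp
  with False show ?thesis
    by (simp add: dmul_def dinv_def Let_def)
qed

definition dihedral :: "nat \<Rightarrow> nat monoid" where
  "dihedral n = \<lparr>carrier = {..<2 * n}, mult = dmul n, one = 0\<rparr>"

lemma carrier_dihedral [simp]: "carrier (dihedral n) = {..<2 * n}"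
  by (simp add: dihedral_def)

lemma one_dihedral [simp]: "\<one>\<^bsub>dihedral n\<^esub> = 0"
  by (simp add: dihedral_def)

lemma group_dihedral:
  assumes "0 < n" shows "group (dihedral n)"
proof (rule groupI)
  fix k assume "k \<in> carrier (dihedral n)"
  then show "\<exists>l \<in> carrier (dihedral n). l \<otimes>\<^bsub>dihedral n\<^esub> k = \<one>\<^bsub>dihedral n\<^esub>"
    using assms by (auto simp: dihedral_def intro!: bexI[of _ "dinv n k"] dinv_less dmul_dinv_left)
qed (use assms in \<open>auto simp: dihedral_def dmul_less dmul_assoc dmul_zero_left\<close>)

lemma inv_dihedral:
  assumes "0 < n" "k < 2 * n" shows "inv\<^bsub>dihedral n\<^esub> k = dinv n k"
  using assms by (intro group.inv_equality group_dihedral)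
    (simp_all add: dihedral_def dinv_less dmul_dinv_left)

lemma gmul_eq_group_conv: "gmul n = group_conv (dihedral n)"
  by (simp add: fun_eq_iff gmul_def group_conv_def dihedral_def)

lemma gmul_identity_coeff:
  assumes "0 < n" shows "gmul n x y 0 = (\<Sum>k<2 * n. x (dinv n k) * y k)"
proof -
  interpret group "dihedral n"
    using assms by (rule group_dihedral)
  have "gmul n x y 0 = (\<Sum>k<2 * n. x (inv\<^bsub>dihedral n\<^esub> k) * y k)"
    using group_conv_one[of x y] by (simp add: gmul_eq_group_conv)
  also have "\<dots> = (\<Sum>k<2 * n. x (dinv n k) * y k)"
    using assms by (simp add: inv_dihedral)
  finally show ?thesis .
qed

lemma gmul_translate:
  assumes "0 < n" "m < 2 * n"
  shows "gmul n x (gmul n y (indicator {dinv n m})) 0 = gmul n x y m"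
proof -
  interpret group "dihedral n"
    using assms(1) by (rule group_dihedral)
  show ?thesis
    using group_conv_translate[of m x y] assms by (simp add: gmul_eq_group_conv inv_dihedral)
qed

lemma gmul_vspace:
  assumes "0 < n" shows "gmul n x y \<in> vspace n"
proof -
  have "dmul n k l \<noteq> m" if "2 * n \<le> m" for k l m
    using dmul_less[OF assms, of k l] that by linarith
  then show ?thesis
    by (simp add: vspace_def gmul_def)
qed

lemma dinv_permutes: "dinv n permutes {..<2 * n}"
proof (rule bij_imp_permutes)
  show "bij_betw (dinv n) {..<2 * n} {..<2 * n}"
    by (rule bij_betwI[where g = "dinv n"]) (auto simp: dinv_less dinv_dinv)
qed (simp add: dinv_def)

lemma comp_dinv_vspace: "v \<in> vspace n \<Longrightarrow> v \<circ> dinv n \<in> vspace n"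
  by (simp add: vspace_def dinv_def)

lemma indicator_ZG: "g < 2 * n \<Longrightarrow> indicator {g} \<in> ZG n"
  by (simp add: ZG_def vspace_def indicator_def)

lemma full_rank_finite_separating:
  assumes "full_rank n L"
  obtains F where "finite F" "F \<subseteq> L"
    "\<And>x j. \<forall>a\<in>F. (\<Sum>k<2 * n. a k * x k) = 0 \<Longrightarrow> j < 2 * n \<Longrightarrow> x j = 0"
proof -
  have "\<exists>F. finite F \<and> F \<subseteq> L \<and> (\<forall>x. (\<forall>a\<in>F. (\<Sum>k<2 * n. a k * x k) = 0) \<longrightarrow> x j = 0)"
    if j: "j < 2 * n" for j
  proof -
    have "(indicator {j} :: nat \<Rightarrow> real) \<in> vspace n"
      using j by (simp add: vspace_def)
    then have "\<exists>m a c. (\<forall>i<m. a i \<in> L) \<and> indicator {j} = (\<lambda>k. \<Sum>i<(m::nat). c i * a i k)"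
      using assms by (simp add: full_rank_def)
    then obtain m :: nat and a c where a: "\<forall>i<m. a i \<in> L"
      and e: "(indicator {j} :: nat \<Rightarrow> real) = (\<lambda>k. \<Sum>i<m. c i * a i k)"
      by blast
    have "x j = 0" if orth: "\<forall>b\<in>a ` {..<m}. (\<Sum>k<2 * n. b k * x k) = 0" for x
    proof -
      have "x j = (\<Sum>k<2 * n. if k = j then x k else 0)"
        using j by (simp add: sum.delta)
      also have "\<dots> = (\<Sum>k<2 * n. indicator {j} k * x k)"
        by (intro sum.cong) (simp_all add: indicator_def)
      also have "\<dots> = (\<Sum>i<m. c i * (\<Sum>k<2 * n. a i k * x k))"
        by (simp add: e sum_distrib_left sum_distrib_right sum.swap[of _ "{..<m}"] mult.assoc)
      also have "\<dots> = 0"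
        using orth by simp
      finally show ?thesis .
    qed
    then show ?thesis
      using a by (intro exI[of _ "a ` {..<m}"]) auto
  qed
  then have ex: "\<forall>j\<in>{..<2 * n}. \<exists>F. finite F \<and> F \<subseteq> L \<and>
      (\<forall>x. (\<forall>a\<in>F. (\<Sum>k<2 * n. a k * x k) = 0) \<longrightarrow> x j = 0)"
    by blast
  obtain Fj where Fj: "\<forall>j\<in>{..<2 * n}. finite (Fj j) \<and> Fj j \<subseteq> L \<and>
      (\<forall>x. (\<forall>a\<in>Fj j. (\<Sum>k<2 * n. a k * x k) = 0) \<longrightarrow> x j = 0)"
    using bchoice[OF ex] by blast
  show thesis
    by (rule that[of "\<Union>j<2 * n. Fj j"]) (use Fj in auto)
qed

lemma dual_lattice_QG:
  assumes "L \<subseteq> ZG n" "full_rank n L" "u \<in> dual_lattice n L"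
  shows "u \<in> QG n"
proof -
  obtain F where F: "finite F" "F \<subseteq> L"
    "\<And>x j. \<forall>a\<in>F. (\<Sum>k<2 * n. a k * x k) = 0 \<Longrightarrow> j < 2 * n \<Longrightarrow> x j = 0"
    using full_rank_finite_separating[OF assms(2)] by blast
  have u: "u \<in> vspace n" "\<And>v. v \<in> L \<Longrightarrow> (\<Sum>k<2 * n. u k * v k) \<in> \<int>"
    using assms(3) by (auto simp: dual_lattice_def)
  have "u k \<in> \<rat>" for k
  proof (cases "k < 2 * n")
    case False
    then show ?thesis
      using u(1) by (simp add: vspace_def)
  next
    case True
    show ?thesis
    proof (rule rat_of_integral_products[of F])
      show "x j = 0" if "\<forall>a\<in>F. (\<Sum>k<2 * n. a k * x k) = 0" "j < 2 * n" for x j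
        using that by (rule F(3))
      show "a j \<in> \<int>" if "a \<in> F" for a j
        using that F(2) assms(1) by (auto simp: ZG_def)
      show "(\<Sum>j<2 * n. a j * u j) \<in> \<int>" if "a \<in> F" for a
        using that F(2) u(2) by (force simp: mult.commute)
    qed (use F(1) True in simp_all)
  qed
  then show ?thesis
    using u(1) by (simp add: QG_def)
qed

lemma left_dual_comp_dinv:
  assumes "0 < n" "x \<in> left_dual n L"
  shows "x \<circ> dinv n \<in> dual_lattice n L"
proof -
  have "(\<Sum>k<2 * n. (x \<circ> dinv n) k * v k) \<in> \<int>" if "v \<in> L" for v
  proof -
    have "gmul n x v \<in> ZG n"
      using that assms(2) by (simp add: left_dual_def)
    then have "gmul n x v 0 \<in> \<int>"
      by (simp add: ZG_def)
    then show ?thesis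
      by (simp add: gmul_identity_coeff[OF assms(1)])
  qed
  moreover have "x \<circ> dinv n \<in> vspace n"
    using assms(2) by (intro comp_dinv_vspace) (simp add: left_dual_def QG_def)
  ultimately show ?thesis
    by (simp add: dual_lattice_def)
qed

lemma dual_lattice_comp_dinv:
  assumes "0 < n" "right_ideal n L" "full_rank n L" "u \<in> dual_lattice n L"
  shows "u \<circ> dinv n \<in> left_dual n L"
proof -
  have "u \<in> QG n"
    using assms(2-4) by (intro dual_lattice_QG) (simp_all add: right_ideal_def)
  then have "u \<circ> dinv n \<in> QG n"
    using comp_dinv_vspace by (simp add: QG_def)
  moreover have "gmul n (u \<circ> dinv n) y \<in> ZG n" if y: "y \<in> L" for y
  proof -
    have "gmul n (u \<circ> dinv n) y m \<in> \<int>" if m: "m < 2 * n" for m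
    proof -
      let ?w = "gmul n y (indicator {dinv n m})"
      have "?w \<in> L"
        using assms(2) y indicator_ZG[OF dinv_less[OF m]] by (simp add: right_ideal_def)
      then have "(\<Sum>k<2 * n. u k * ?w k) \<in> \<int>"
        using assms(4) by (simp add: dual_lattice_def)
      moreover have "gmul n (u \<circ> dinv n) y m = (\<Sum>k<2 * n. u k * ?w k)"
        using gmul_translate[OF assms(1) m, symmetric] by (simp add: gmul_identity_coeff[OF assms(1)] dinv_dinv)
      ultimately show ?thesis
        by simp
    qed
    moreover have "gmul n (u \<circ> dinv n) y m = 0" if "\<not> m < 2 * n" for m
      using gmul_vspace[OF assms(1)] that by (simp add: vspace_def)
    ultimately show ?thesis
      using gmul_vspace[OF assms(1)] by (simp add: ZG_def) (metis Ints_0)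
  qed
  ultimately show ?thesis
    by (simp add: left_dual_def)
qed

theorem lemma3:
  fixes n :: nat and I :: "(nat \<Rightarrow> real) set"
  assumes "n \<ge> 1"
    and "invertible_right_ideal n I"
    and "full_rank n I"
  shows "\<exists>\<sigma>. \<sigma> permutes {..<2*n} \<and>
           dual_lattice n I = (\<lambda>v. v \<circ> \<sigma>) ` left_dual n I"
proof -
  have n: "0 < n"
    using assms(1) by simp
  have I: "right_ideal n I"
    using assms(2) by (simp add: invertible_right_ideal_def)
  have "dual_lattice n I = (\<lambda>v. v \<circ> dinv n) ` left_dual n I"
  proof (intro equalityI subsetI)
    fix u assume u: "u \<in> dual_lattice n I"
    have "u = (u \<circ> dinv n) \<circ> dinv n"
      by (simp add: fun_eq_iff dinv_dinv)
    then show "u \<in> (\<lambda>v. v \<circ> dinv n) ` left_dual n I"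
      using dual_lattice_comp_dinv[OF n I assms(3) u] by blast
  qed (auto intro: left_dual_comp_dinv[OF n])
  then show ?thesis
    using dinv_permutes by blast
qed

end
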